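(* Let $G$ be an oriented graph and let $a,b$ be positive integers. Then $\chi^*_o(G) \leq \frac{a}{b}$ if and only if there exist a positive integer $c$ and a consistent sub-orientation $\overrightarrow{KG}_{ac,bc}$ of the Kneser graph $KG_{ac,bc}$ such that $G$ admits a homomorphism to $\overrightarrow{KG}_{ac,bc}$.
   Context: An oriented graph is a finite directed graph with no directed cycle of length 1 or 2. For a set $S$ of $k$ colors let $P_b(S)$ be the set of $b$-element subsets of $S$. A $b$-fold oriented $k$-coloring of an oriented graph $G$ is a map $f: V(G) \to P_b(S)$ with $|S|=k$ such that (i) $f(x)\cap f(y)=\emptyset$ for every arc $xy$, and (ii) for all arcs $xy, zw$, $f(x)\cap f(w)\neq\emptyset$ implies $f(y)\cap f(z)=\emptyset$. The $b$-fold oriented chromatic number $\chi^b_o(G)$ is the minimum $k$ such that $G$ admits a $b$-fold oriented $k$-coloring, and the fractional oriented chromatic number is $\chi^*_o(G)=\lim_{b\to\infty}\chi^b_o(G)/b=\inf_{b\geq 1}\chi^b_o(G)/b$. A homomorphism of an oriented graph $G$ to an oriented graph $H$ is a map $f:V(G)\to V(H)$ such that $f(x)f(y)$ is an arc of $H$ whenever $xy$ is an arc of $G$. The Kneser graph $KG_{a,b}$ has the $b$-subsets of an $a$-set as vertices, two being adjacent iff they are disjoint. A consistent sub-orientation of $KG_{a,b}$ is an oriented graph $\overrightarrow{KG}_{a,b}$ whose underlying graph is a subgraph of $KG_{a,b}$ and such that for any two arcs $xy$ and $wz$, $x\cap z\neq\emptyset$ implies $y\cap w=\emptyset$. *)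

theory Defs
  imports Complex_Main
begin

definition oriented_graph :: "'a set \<Rightarrow> ('a \<times> 'a) set \<Rightarrow> bool" where
  "oriented_graph V A \<longleftrightarrow> finite V \<and> A \<subseteq> V \<times> V \<and> (\<forall>x. (x, x) \<notin> A)
     \<and> (\<forall>x y. (x, y) \<in> A \<longrightarrow> (y, x) \<notin> A)"

definition bfold_oriented_coloring ::
  "'a set \<Rightarrow> ('a \<times> 'a) set \<Rightarrow> nat \<Rightarrow> 'c set \<Rightarrow> ('a \<Rightarrow> 'c set) \<Rightarrow> bool" where
  "bfold_oriented_coloring V A b S f \<longleftrightarrow>
     (\<forall>x\<in>V. f x \<subseteq> S \<and> card (f x) = b)
   \<and> (\<forall>x y. (x, y) \<in> A \<longrightarrow> f x \<inter> f y = {})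
   \<and> (\<forall>x y z w. (x, y) \<in> A \<longrightarrow> (z, w) \<in> A \<longrightarrow> f x \<inter> f w \<noteq> {} \<longrightarrow> f y \<inter> f z = {})"

text \<open>b-fold oriented chromatic number: least k admitting a b-fold oriented k-coloring
  (colors drawn, w.l.o.g., from the naturals).\<close>
definition bfold_oriented_chromatic_number :: "'a set \<Rightarrow> ('a \<times> 'a) set \<Rightarrow> nat \<Rightarrow> nat" where
  "bfold_oriented_chromatic_number V A b =
     (LEAST k. \<exists>(S :: nat set) f. finite S \<and> card S = k \<and> bfold_oriented_coloring V A b S f)"

definition fractional_oriented_chromatic_number :: "'a set \<Rightarrow> ('a \<times> 'a) set \<Rightarrow> real" where
  "fractional_oriented_chromatic_number V A =
     (INF b \<in> {b::nat. 1 \<le> b}. real (bfold_oriented_chromatic_number V A b) / real b)"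

definition consistent_kneser_suborientation ::
  "nat \<Rightarrow> nat \<Rightarrow> nat set set \<Rightarrow> (nat set \<times> nat set) set \<Rightarrow> bool" where
  "consistent_kneser_suborientation a b W B \<longleftrightarrow>
     oriented_graph W B
   \<and> W \<subseteq> {s. s \<subseteq> {..<a} \<and> card s = b}
   \<and> (\<forall>x y. (x, y) \<in> B \<longrightarrow> x \<inter> y = {})
   \<and> (\<forall>x y w z. (x, y) \<in> B \<longrightarrow> (w, z) \<in> B \<longrightarrow> x \<inter> z \<noteq> {} \<longrightarrow> y \<inter> w = {})"

definition oriented_hom ::
  "'a set \<Rightarrow> ('a \<times> 'a) set \<Rightarrow> 'b set \<Rightarrow> ('b \<times> 'b) set \<Rightarrow> ('a \<Rightarrow> 'b) \<Rightarrow> bool" where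
  "oriented_hom V A W B h \<longleftrightarrow> (\<forall>x\<in>V. h x \<in> W) \<and> (\<forall>x y. (x, y) \<in> A \<longrightarrow> (h x, h y) \<in> B)"

end

theory Submission
  imports Defs
begin

text \<open>The colour classes of a \<open>b\<close>-fold oriented colouring form a family \<open>F\<close> of pairwise
  compatible vertex sets, and giving each class weight \<open>1/b\<close> covers every vertex with total weight
  \<open>1\<close>. Conversely, integer multiplicities on a compatible family that cover every vertex at least
  \<open>D\<close> times give a \<open>D\<close>-fold colouring. So \<open>\<chi>\<^sup>*\<^sub>o\<close> is the least optimum, over the finitely many
  compatible families, of the covering linear program; that optimum is attained at a vertex of
  the feasible polyhedron, which is rational, and clearing denominators shows that the infimum
  defining \<open>\<chi>\<^sup>*\<^sub>o\<close> is a minimum \<open>\<chi>\<^sup>D\<^sub>o / D\<close>. If it is at most \<open>a/b\<close>, replacing every colour by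
  \<open>b\<close> copies gives a \<open>bD\<close>-fold colouring with at most \<open>aD\<close> colours, and a \<open>bc\<close>-fold colouring
  with colours in \<open>{..<ac}\<close> is the same thing as a homomorphism to a consistent sub-orientation of
  \<open>KG\<^bsub>ac,bc\<^esub>\<close>.\<close>

section \<open>Rational solutions of linear systems\<close>

definition dot_on :: "'i set \<Rightarrow> ('i \<Rightarrow> 'a::comm_semiring_0) \<Rightarrow> ('i \<Rightarrow> 'a) \<Rightarrow> 'a" where
  "dot_on I a x = (\<Sum>i\<in>I. a i * x i)"

lemma dot_on_insert:
  "finite I \<Longrightarrow> j \<notin> I \<Longrightarrow> dot_on (insert j I) a x = a j * x j + dot_on I a x"
  by (simp add: dot_on_def)

lemma dot_on_cong: "(\<And>i. i \<in> I \<Longrightarrow> x i = y i) \<Longrightarrow> dot_on I a x = dot_on I a y"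
  by (simp add: dot_on_def)

lemma dot_on_fun_upd_notin: "j \<notin> I \<Longrightarrow> dot_on I a (x(j := v)) = dot_on I a x"
  by (rule dot_on_cong) auto

lemma dot_on_add_scaled: "dot_on I a (\<lambda>i. x i + t * y i) = dot_on I a x + t * dot_on I a y"
  by (simp add: dot_on_def algebra_simps sum.distrib sum_distrib_left)

lemma dot_on_diff: "dot_on I a (\<lambda>i. x i - y i) = dot_on I a x - dot_on I a (y :: _ \<Rightarrow> 'a::comm_ring)"
  by (simp add: dot_on_def right_diff_distrib sum_subtractf)

lemma dot_on_uminus: "dot_on I a (\<lambda>i. - x i) = - dot_on I a (x :: _ \<Rightarrow> 'a::comm_ring)"
  by (simp add: dot_on_def sum_negf)

lemma dot_on_diff_scaled_left:
  "dot_on I (\<lambda>i. a i - c * b i) x = dot_on I a x - c * dot_on I b (x :: _ \<Rightarrow> 'a::comm_ring)"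
  by (simp add: dot_on_def algebra_simps sum_subtractf sum_distrib_left)

lemma dot_on_unit:
  "finite I \<Longrightarrow> j \<in> I \<Longrightarrow> dot_on I (\<lambda>i. if i = j then 1 else 0) x = (x j :: 'a::comm_semiring_1)"
proof -
  assume "finite I" "j \<in> I"
  have "dot_on I (\<lambda>i. if i = j then 1 else 0) x = (\<Sum>i\<in>I. if i = j then x i else 0)"
    unfolding dot_on_def by (rule sum.cong) auto
  then show ?thesis using \<open>finite I\<close> \<open>j \<in> I\<close> by simp
qed

lemma dot_on_eliminate:
  assumes "finite I" and "j \<notin> I" and "a0 j \<noteq> 0"
  shows "dot_on I (\<lambda>i. a i - a j / a0 j * a0 i) x
    = dot_on (insert j I) a x - a j / a0 j * dot_on (insert j I) a0 (x :: _ \<Rightarrow> 'a::field)"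
  unfolding dot_on_diff_scaled_left using assms by (simp add: dot_on_insert algebra_simps)

text \<open>Gaussian elimination: removing one variable leaves a system with rational coefficients.\<close>
lemma rational_solution_of_rational_system:
  fixes x :: "'i \<Rightarrow> 'a::field_char_0"
  assumes "finite I"
    and "\<And>a \<beta>. (a, \<beta>) \<in> E \<Longrightarrow> \<beta> \<in> \<rat> \<and> (\<forall>i\<in>I. a i \<in> \<rat>)"
    and "\<And>a \<beta>. (a, \<beta>) \<in> E \<Longrightarrow> dot_on I a x = \<beta>"
  shows "\<exists>y. (\<forall>i\<in>I. y i \<in> \<rat>) \<and> (\<forall>(a, \<beta>)\<in>E. dot_on I a y = \<beta>)"
  using assms
proof (induction I arbitrary: E x rule: finite_induct)
  case empty
  then show ?case by (auto simp: dot_on_def)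
next
  case (insert j I)
  show ?case
  proof (cases "\<exists>(a, \<beta>)\<in>E. a j \<noteq> 0")
    case False
    have "dot_on I a x = \<beta>" if "(a, \<beta>) \<in> E" for a \<beta>
      using insert.prems(2)[OF that] False that insert.hyps by (auto simp: dot_on_insert)
    then obtain y where y: "\<forall>i\<in>I. y i \<in> \<rat>" "\<forall>(a, \<beta>)\<in>E. dot_on I a y = \<beta>"
      using insert.IH[of E x] insert.prems(1) by blast
    define z where "z = y(j := 0)"
    have "\<forall>i\<in>insert j I. z i \<in> \<rat>"
      using y(1) by (simp add: z_def)
    moreover have "dot_on (insert j I) a z = dot_on I a y" for a
      using insert.hyps by (simp add: z_def dot_on_insert dot_on_fun_upd_notin)
    ultimately show ?thesis
      using y(2) by (intro exI[of _ z]) auto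
  next
    case True
    then obtain a0 \<beta>0 where a0: "(a0, \<beta>0) \<in> E" "a0 j \<noteq> 0" by auto
    define c where "c a = a j / a0 j" for a :: "'i \<Rightarrow> 'a"
    define E' where "E' = (\<lambda>(a, \<beta>). (\<lambda>i. a i - c a * a0 i, \<beta> - c a * \<beta>0)) ` E"
    have eliminate: "dot_on I (\<lambda>i. a i - c a * a0 i) z
        = dot_on (insert j I) a z - c a * dot_on (insert j I) a0 z" for a z
      unfolding c_def using insert.hyps a0(2) by (rule dot_on_eliminate)
    have "\<exists>y. (\<forall>i\<in>I. y i \<in> \<rat>) \<and> (\<forall>(a, \<beta>)\<in>E'. dot_on I a y = \<beta>)"
    proof (rule insert.IH)
      fix a' \<beta>' assume "(a', \<beta>') \<in> E'"
      then obtain a \<beta> where ab: "(a, \<beta>) \<in> E" "a' = (\<lambda>i. a i - c a * a0 i)" "\<beta>' = \<beta> - c a * \<beta>0"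
        unfolding E'_def by auto
      show "\<beta>' \<in> \<rat> \<and> (\<forall>i\<in>I. a' i \<in> \<rat>)"
        using insert.prems(1)[OF ab(1)] insert.prems(1)[OF a0(1)] ab(2,3) by (simp add: c_def)
      show "dot_on I a' x = \<beta>'"
        using eliminate[of a x] insert.prems(2)[OF ab(1)] insert.prems(2)[OF a0(1)] ab(2,3) by simp
    qed
    then obtain y where y: "\<forall>i\<in>I. y i \<in> \<rat>" "\<forall>(a, \<beta>)\<in>E'. dot_on I a y = \<beta>"
      by blast
    define y' where "y' = y(j := (\<beta>0 - dot_on I a0 y) / a0 j)"
    have "dot_on (insert j I) a0 y' = \<beta>0"
      using insert.hyps a0(2) by (simp add: y'_def dot_on_insert dot_on_fun_upd_notin)
    moreover have "dot_on I (\<lambda>i. a i - c a * a0 i) y' = \<beta> - c a * \<beta>0" if "(a, \<beta>) \<in> E" for a \<beta>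
      using y(2) that insert.hyps by (force simp: E'_def y'_def dot_on_fun_upd_notin)
    ultimately have "\<forall>(a, \<beta>)\<in>E. dot_on (insert j I) a y' = \<beta>"
      using eliminate by fastforce
    moreover have "\<forall>i\<in>insert j I. y' i \<in> \<rat>"
      using y(1) insert.prems(1)[OF a0(1)] unfolding y'_def dot_on_def
      by (auto intro!: Rats_diff Rats_divide Rats_mult)
    ultimately show ?thesis
      by blast
  qed
qed

lemma common_denominator:
  fixes v :: "'i \<Rightarrow> 'a::field_char_0"
  assumes "finite F" and "\<forall>U\<in>F. v U \<in> \<rat>"
  shows "\<exists>D::nat. 0 < D \<and> (\<forall>U\<in>F. of_nat D * v U \<in> \<int>)"
  using assms
proof (induction F rule: finite_induct)
  case empty
  show ?case by (intro exI[of _ 1]) simp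
next
  case (insert U F)
  then obtain D :: nat where D: "0 < D" "\<forall>U\<in>F. of_nat D * v U \<in> \<int>"
    by auto
  obtain p q :: int where "0 < q" and v: "v U = of_int p / of_int q"
    using insert.prems Rats_cases' by (metis insertI1)
  have D': "of_nat (D * nat q) = of_nat D * (of_int q :: 'a)"
    using \<open>0 < q\<close> by simp
  show ?case
  proof (intro exI[of _ "D * nat q"] conjI ballI)
    show "0 < D * nat q"
      using D(1) \<open>0 < q\<close> by simp
    fix U' assume "U' \<in> insert U F"
    then show "of_nat (D * nat q) * v U' \<in> \<int>"
    proof
      assume "U' = U"
      have "of_nat (D * nat q) * v U = of_nat D * (of_int q * (of_int p / of_int q))"
        by (simp only: D' v mult.assoc)
      also have "\<dots> = of_int (int D * p)"
        using \<open>0 < q\<close> by simp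
      finally show ?thesis
        unfolding \<open>U' = U\<close> by (metis Ints_of_int)
    next
      assume "U' \<in> F"
      then have "of_nat (D * nat q) * v U' = of_int q * (of_nat D * v U')"
        unfolding D' by (simp add: algebra_simps)
      then show ?thesis
        using D(2) \<open>U' \<in> F\<close> by (metis Ints_mult Ints_of_int)
    qed
  qed
qed

section \<open>Linear programs with rational data\<close>

text \<open>The linear program minimises \<open>\<Sum>i\<in>I. w i\<close> over \<open>w \<ge> 0\<close> subject to \<open>\<beta> \<le> dot_on I a w\<close> for
  \<open>(a, \<beta>) \<in> C\<close>; vectors are normalised to vanish outside \<open>I\<close>.\<close>

definition lp_feasible :: "'i set \<Rightarrow> (('i \<Rightarrow> real) \<times> real) set \<Rightarrow> ('i \<Rightarrow> real) \<Rightarrow> bool" where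
  "lp_feasible I C w \<longleftrightarrow>
     (\<forall>i. i \<notin> I \<longrightarrow> w i = 0) \<and> (\<forall>i\<in>I. 0 \<le> w i) \<and> (\<forall>(a, \<beta>)\<in>C. \<beta> \<le> dot_on I a w)"

definition tight_constraints ::
  "'i set \<Rightarrow> (('i \<Rightarrow> real) \<times> real) set \<Rightarrow> ('i \<Rightarrow> real) \<Rightarrow> (('i \<Rightarrow> real) \<times> real) set" where
  "tight_constraints I C w = {(a, \<beta>) \<in> C. dot_on I a w = \<beta>}"

definition zero_coords :: "'i set \<Rightarrow> ('i \<Rightarrow> real) \<Rightarrow> 'i set" where
  "zero_coords I w = {i \<in> I. w i = 0}"

definition lp_tangent :: "'i set \<Rightarrow> (('i \<Rightarrow> real) \<times> real) set \<Rightarrow> ('i \<Rightarrow> real) \<Rightarrow> ('i \<Rightarrow> real) \<Rightarrow> bool" where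
  "lp_tangent I C w d \<longleftrightarrow>
     (\<forall>i. i \<notin> I \<longrightarrow> d i = 0) \<and> (\<forall>i\<in>zero_coords I w. d i = 0)
   \<and> (\<forall>(a, \<beta>)\<in>tight_constraints I C w. dot_on I a d = 0)"

definition lp_vertex :: "'i set \<Rightarrow> (('i \<Rightarrow> real) \<times> real) set \<Rightarrow> ('i \<Rightarrow> real) \<Rightarrow> bool" where
  "lp_vertex I C w \<longleftrightarrow> lp_feasible I C w \<and> (\<forall>d. lp_tangent I C w d \<longrightarrow> d = (\<lambda>_. 0))"

definition lp_optimal :: "'i set \<Rightarrow> (('i \<Rightarrow> real) \<times> real) set \<Rightarrow> ('i \<Rightarrow> real) \<Rightarrow> bool" where
  "lp_optimal I C v \<longleftrightarrow> lp_feasible I C v \<and> (\<forall>w. lp_feasible I C w \<longrightarrow> sum v I \<le> sum w I)"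

lemma lp_tangent_uminus: "lp_tangent I C w d \<Longrightarrow> lp_tangent I C w (\<lambda>i. - d i)"
  by (auto simp: lp_tangent_def dot_on_uminus)

lemma lp_descent_direction:
  assumes "finite I" and "lp_tangent I C w d" and "d \<noteq> (\<lambda>_. 0)"
  obtains e where "lp_tangent I C w e" and "sum e I \<le> 0" and "\<exists>i\<in>I. e i < 0"
proof -
  obtain i0 where "d i0 \<noteq> 0"
    using \<open>d \<noteq> (\<lambda>_. 0)\<close> by auto
  with assms(2) have i0: "i0 \<in> I" "d i0 \<noteq> 0"
    by (auto simp: lp_tangent_def)
  consider "sum d I \<le> 0" "\<exists>i\<in>I. d i < 0" | "0 \<le> sum d I" "\<exists>i\<in>I. 0 < d i"
  proof (cases "sum d I \<le> 0")
    case True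
    then show ?thesis
      using that i0 sum_nonneg[of I d] by (metis linorder_neqE_linordered_idom not_less)
  next
    case False
    moreover have "\<exists>i\<in>I. 0 < d i"
      using False sum_nonpos[of I d] by (meson not_less)
    ultimately show ?thesis
      using that(2) by fastforce
  qed
  then show ?thesis
  proof cases
    case 1
    then show ?thesis using that assms(2) by blast
  next
    case 2
    then show ?thesis
      using that[of "\<lambda>i. - d i"] lp_tangent_uminus[OF assms(2)] by (simp add: sum_negf)
  qed
qed

lemma lp_tangent_step_mono:
  assumes "lp_tangent I C w e"
  shows "tight_constraints I C w \<subseteq> tight_constraints I C (\<lambda>i. w i + t * e i)"
    and "zero_coords I w \<subseteq> zero_coords I (\<lambda>i. w i + t * e i)"
  using assms by (auto simp: lp_tangent_def tight_constraints_def zero_coords_def dot_on_add_scaled)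

lemma lp_feasible_step:
  assumes "lp_feasible I C w" and "lp_tangent I C w e" and "0 \<le> t"
    and coord_bound: "\<And>i. i \<in> I \<Longrightarrow> e i < 0 \<Longrightarrow> t * - e i \<le> w i"
    and constraint_bound:
      "\<And>a \<beta>. (a, \<beta>) \<in> C \<Longrightarrow> dot_on I a e < 0 \<Longrightarrow> t * - dot_on I a e \<le> dot_on I a w - \<beta>"
  shows "lp_feasible I C (\<lambda>i. w i + t * e i)"
  unfolding lp_feasible_def
proof (intro conjI allI impI ballI; clarify?)
  fix i
  show "i \<notin> I \<Longrightarrow> w i + t * e i = 0"
    using assms(1,2) by (simp add: lp_feasible_def lp_tangent_def)
  assume "i \<in> I"
  then show "0 \<le> w i + t * e i"
    using assms(1,3) coord_bound[of i]
    by (cases "e i < 0") (auto simp: lp_feasible_def not_less intro!: add_nonneg_nonneg)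
next
  fix a \<beta> assume "(a, \<beta>) \<in> C"
  then have "\<beta> \<le> dot_on I a w"
    using assms(1) by (auto simp: lp_feasible_def)
  then show "\<beta> \<le> dot_on I a (\<lambda>i. w i + t * e i)"
    using \<open>(a, \<beta>) \<in> C\<close> assms(3) constraint_bound[of a \<beta>]
    by (cases "dot_on I a e < 0") (auto simp: dot_on_add_scaled not_less intro!: add_increasing2)
qed

text \<open>The longest step from \<open>w\<close> along \<open>e\<close> that stays feasible: the least of the ratios at
  which a coordinate or a constraint reaches its bound.\<close>
lemma lp_step_length:
  assumes "finite I" and "finite C" and feasible: "lp_feasible I C w" and "\<exists>i\<in>I. e i < 0"
  obtains t where "0 \<le> t"
    and "\<And>i. i \<in> I \<Longrightarrow> e i < 0 \<Longrightarrow> t * - e i \<le> w i"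
    and "\<And>a \<beta>. (a, \<beta>) \<in> C \<Longrightarrow> dot_on I a e < 0 \<Longrightarrow> t * - dot_on I a e \<le> dot_on I a w - \<beta>"
    and "(\<exists>i\<in>I. e i < 0 \<and> w i + t * e i = 0)
      \<or> (\<exists>(a, \<beta>)\<in>C. dot_on I a e < 0 \<and> dot_on I a w + t * dot_on I a e = \<beta>)"
proof
  define R1 where "R1 = (\<lambda>i. w i / - e i) ` {i \<in> I. e i < 0}"
  define R2 where "R2 = (\<lambda>(a, \<beta>). (dot_on I a w - \<beta>) / - dot_on I a e) ` {(a, \<beta>) \<in> C. dot_on I a e < 0}"
  define t where "t = Min (R1 \<union> R2)"
  have "finite R2"
    unfolding R2_def by (rule finite_imageI, rule finite_subset[OF _ assms(2)]) auto
  then have fin: "finite (R1 \<union> R2)"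
    using assms(1) by (simp add: R1_def)
  have "R1 \<union> R2 \<noteq> {}"
    using assms(4) by (auto simp: R1_def)
  then have "t \<in> R1 \<union> R2"
    unfolding t_def using fin by (intro Min_in)
  then show "0 \<le> t"
    using feasible by (force simp: R1_def R2_def lp_feasible_def intro: divide_nonneg_neg)
  show "t * - e i \<le> w i" if "i \<in> I" "e i < 0" for i
  proof -
    have "w i / - e i \<in> R1"
      using that unfolding R1_def by (intro image_eqI) auto
    then have "t \<le> w i / - e i"
      unfolding t_def using fin by (intro Min_le) auto
    then show ?thesis
      using \<open>e i < 0\<close> by (simp only: pos_le_divide_eq[of "- e i"] neg_0_less_iff_less)
  qed
  show "t * - dot_on I a e \<le> dot_on I a w - \<beta>" if "(a, \<beta>) \<in> C" "dot_on I a e < 0" for a \<beta>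
  proof -
    have "(dot_on I a w - \<beta>) / - dot_on I a e \<in> R2"
      using that unfolding R2_def by (intro image_eqI[where x = "(a, \<beta>)"]) auto
    then have "t \<le> (dot_on I a w - \<beta>) / - dot_on I a e"
      unfolding t_def using fin by (intro Min_le) auto
    then show ?thesis
      using \<open>dot_on I a e < 0\<close> by (simp only: pos_le_divide_eq[of "- dot_on I a e"] neg_0_less_iff_less)
  qed
  show "(\<exists>i\<in>I. e i < 0 \<and> w i + t * e i = 0)
      \<or> (\<exists>(a, \<beta>)\<in>C. dot_on I a e < 0 \<and> dot_on I a w + t * dot_on I a e = \<beta>)"
    using \<open>t \<in> R1 \<union> R2\<close> by (force simp: R1_def R2_def field_simps)
qed

lemma lp_descent_step:
  assumes "finite I" and "finite C" and feasible: "lp_feasible I C w" and tangent: "lp_tangent I C w e"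
    and "sum e I \<le> 0" and "\<exists>i\<in>I. e i < 0"
  obtains w' where "lp_feasible I C w'" and "sum w' I \<le> sum w I"
    and "tight_constraints I C w \<subseteq> tight_constraints I C w'" and "zero_coords I w \<subseteq> zero_coords I w'"
    and "tight_constraints I C w \<noteq> tight_constraints I C w' \<or> zero_coords I w \<noteq> zero_coords I w'"
proof -
  obtain t where "0 \<le> t"
    and coord_bound: "\<And>i. i \<in> I \<Longrightarrow> e i < 0 \<Longrightarrow> t * - e i \<le> w i"
    and constraint_bound:
      "\<And>a \<beta>. (a, \<beta>) \<in> C \<Longrightarrow> dot_on I a e < 0 \<Longrightarrow> t * - dot_on I a e \<le> dot_on I a w - \<beta>"
    and hit: "(\<exists>i\<in>I. e i < 0 \<and> w i + t * e i = 0)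
      \<or> (\<exists>(a, \<beta>)\<in>C. dot_on I a e < 0 \<and> dot_on I a w + t * dot_on I a e = \<beta>)"
    using lp_step_length[OF assms(1,2) feasible assms(6)] by blast
  define w' where "w' = (\<lambda>i. w i + t * e i)"
  have "lp_feasible I C w'"
    unfolding w'_def using feasible tangent \<open>0 \<le> t\<close> coord_bound constraint_bound
    by (rule lp_feasible_step)
  moreover have "sum w' I \<le> sum w I"
    using \<open>sum e I \<le> 0\<close> \<open>0 \<le> t\<close>
    by (simp add: w'_def sum.distrib sum_distrib_left[symmetric] mult_nonneg_nonpos)
  moreover have "zero_coords I w \<noteq> zero_coords I w' \<or> tight_constraints I C w \<noteq> tight_constraints I C w'"
  proof (cases "\<exists>i\<in>I. e i < 0 \<and> w i + t * e i = 0")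
    case True
    then obtain i where "i \<in> I" "e i < 0" "w i + t * e i = 0"
      by blast
    then have "i \<in> zero_coords I w' - zero_coords I w"
      using tangent by (auto simp: w'_def zero_coords_def lp_tangent_def)
    then show ?thesis by blast
  next
    case False
    then obtain a \<beta> where "(a, \<beta>) \<in> C" "dot_on I a e < 0" "dot_on I a w + t * dot_on I a e = \<beta>"
      using hit by blast
    then have "(a, \<beta>) \<in> tight_constraints I C w' - tight_constraints I C w"
      using tangent by (auto simp: w'_def tight_constraints_def lp_tangent_def dot_on_add_scaled)
    then show ?thesis by blast
  qed
  ultimately show ?thesis
    using that lp_tangent_step_mono[OF tangent] unfolding w'_def by blast
qed

lemma lp_vertex_below:
  assumes "finite I" and "finite C" and "lp_feasible I C w"
  shows "\<exists>v. lp_vertex I C v \<and> sum v I \<le> sum w I"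
  using assms(3)
proof (induction w rule: measure_induct_rule[where
      f = "\<lambda>w. card C + card I - (card (tight_constraints I C w) + card (zero_coords I w))"])
  case (less w)
  show ?case
  proof (cases "lp_vertex I C w")
    case False
    then obtain d where "lp_tangent I C w d" "d \<noteq> (\<lambda>_. 0)"
      using less.prems by (auto simp: lp_vertex_def)
    then obtain e where "lp_tangent I C w e" "sum e I \<le> 0" "\<exists>i\<in>I. e i < 0"
      using lp_descent_direction assms(1) by blast
    then obtain w' where w': "lp_feasible I C w'" "sum w' I \<le> sum w I"
      "tight_constraints I C w \<subseteq> tight_constraints I C w'" "zero_coords I w \<subseteq> zero_coords I w'"
      "tight_constraints I C w \<noteq> tight_constraints I C w' \<or> zero_coords I w \<noteq> zero_coords I w'"
      using lp_descent_step assms(1,2) less.prems by metis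
    have sub: "tight_constraints I C w' \<subseteq> C" "zero_coords I w' \<subseteq> I"
      by (auto simp: tight_constraints_def zero_coords_def)
    then have "card (tight_constraints I C w') \<le> card C" "card (zero_coords I w') \<le> card I"
      using assms(1,2) by (auto intro: card_mono)
    moreover have "card (tight_constraints I C w) \<le> card (tight_constraints I C w')"
      "card (zero_coords I w) \<le> card (zero_coords I w')"
      using w'(3,4) sub assms(1,2) by (auto intro: card_mono finite_subset)
    moreover have "card (tight_constraints I C w) < card (tight_constraints I C w')
        \<or> card (zero_coords I w) < card (zero_coords I w')"
      using w'(3,4,5) sub assms(1,2) by (metis finite_subset psubsetI psubset_card_mono)
    ultimately have "card C + card I - (card (tight_constraints I C w') + card (zero_coords I w'))
        < card C + card I - (card (tight_constraints I C w) + card (zero_coords I w))"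
      by linarith
    then obtain v where "lp_vertex I C v" "sum v I \<le> sum w' I"
      using less.IH w'(1) by blast
    then show ?thesis
      using w'(2) by auto
  qed auto
qed

lemma lp_vertex_unique_solution:
  assumes "lp_vertex I C v" and "\<forall>i. i \<notin> I \<longrightarrow> u i = 0" and "\<forall>i\<in>zero_coords I v. u i = 0"
    and "\<forall>(a, \<beta>)\<in>tight_constraints I C v. dot_on I a u = \<beta>"
  shows "u = v"
proof -
  have "lp_tangent I C v (\<lambda>i. v i - u i)"
    unfolding lp_tangent_def
  proof (intro conjI allI impI ballI; clarify?)
    show "v i - u i = 0" if "i \<notin> I" for i
      using that assms(1,2) by (simp add: lp_vertex_def lp_feasible_def)
    show "v i - u i = 0" if "i \<in> zero_coords I v" for i
      using that assms(3) by (simp add: zero_coords_def)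
    show "dot_on I a (\<lambda>i. v i - u i) = 0" if "(a, \<beta>) \<in> tight_constraints I C v" for a \<beta>
      using that assms(4) by (auto simp: tight_constraints_def dot_on_diff)
  qed
  then have "(\<lambda>i. v i - u i) = (\<lambda>_. 0)"
    using assms(1) by (simp add: lp_vertex_def)
  then show "u = v"
    by (metis eq_iff_diff_eq_0 ext)
qed

lemma finite_lp_vertices:
  assumes "finite I" and "finite C"
  shows "finite {v. lp_vertex I C v}"
proof (rule finite_imageD)
  let ?key = "\<lambda>v. (tight_constraints I C v, zero_coords I v)"
  have "?key ` {v. lp_vertex I C v} \<subseteq> Pow C \<times> Pow I"
    by (auto simp: tight_constraints_def zero_coords_def)
  then show "finite (?key ` {v. lp_vertex I C v})"
    by (rule finite_subset) (simp add: assms)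
  show "inj_on ?key {v. lp_vertex I C v}"
  proof (rule inj_onI)
    fix v u assume "v \<in> {v. lp_vertex I C v}" "u \<in> {v. lp_vertex I C v}" and "?key v = ?key u"
    then have v: "lp_vertex I C v" and u: "lp_vertex I C u"
      and tight: "tight_constraints I C u = tight_constraints I C v"
      and zero: "zero_coords I u = zero_coords I v"
      by simp_all
    show "v = u"
    proof (rule lp_vertex_unique_solution[OF u])
      show "\<forall>i. i \<notin> I \<longrightarrow> v i = 0"
        using v by (simp add: lp_vertex_def lp_feasible_def)
      show "\<forall>i\<in>zero_coords I u. v i = 0"
        unfolding zero by (simp add: zero_coords_def)
      show "\<forall>(a, \<beta>)\<in>tight_constraints I C u. dot_on I a v = \<beta>"
        unfolding tight by (simp add: tight_constraints_def)
    qed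
  qed
qed

lemma lp_vertex_rational:
  fixes I :: "'i set"
  assumes "finite I" and rational: "\<forall>(a, \<beta>)\<in>C. \<beta> \<in> \<rat> \<and> (\<forall>i\<in>I. a i \<in> \<rat>)"
    and "lp_vertex I C v"
  shows "v i \<in> \<rat>"
proof -
  define unit where "unit j = (\<lambda>i. if i = j then 1 else 0 :: real)" for j :: 'i
  define E where "E = tight_constraints I C v \<union> (\<lambda>j. (unit j, 0)) ` zero_coords I v"
  have dot_unit: "dot_on I (unit j) x = x j" if "j \<in> I" for j x
    using assms(1) that by (simp add: unit_def dot_on_unit)
  obtain y where y: "\<forall>i\<in>I. y i \<in> \<rat>" "\<forall>(a, \<beta>)\<in>E. dot_on I a y = \<beta>"
  proof (rule exE[OF rational_solution_of_rational_system[OF assms(1), of E v]])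
    show "\<beta> \<in> \<rat> \<and> (\<forall>i\<in>I. a i \<in> \<rat>)" if "(a, \<beta>) \<in> E" for a \<beta>
      using that rational by (auto simp: E_def tight_constraints_def unit_def)
    show "dot_on I a v = \<beta>" if "(a, \<beta>) \<in> E" for a \<beta>
      using that dot_unit by (auto simp: E_def tight_constraints_def zero_coords_def)
  qed blast
  define u where "u i = (if i \<in> I then y i else 0)" for i
  have "\<forall>i\<in>zero_coords I v. u i = 0"
  proof
    fix i assume i: "i \<in> zero_coords I v"
    then have "(unit i, 0) \<in> E"
      by (simp add: E_def)
    then have "dot_on I (unit i) y = 0"
      using y(2) by fastforce
    then show "u i = 0"
      using i dot_unit by (simp add: u_def zero_coords_def)
  qed
  moreover have "dot_on I a u = dot_on I a y" for a
    by (rule dot_on_cong) (simp add: u_def)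
  then have "\<forall>(a, \<beta>)\<in>tight_constraints I C v. dot_on I a u = \<beta>"
    using y(2) by (auto simp: E_def)
  ultimately have "u = v"
    by (intro lp_vertex_unique_solution[OF assms(3)]) (auto simp: u_def)
  then have "v i = u i"
    by simp
  then show ?thesis
    using y(1) by (simp add: u_def)
qed

theorem lp_rational_optimum:
  assumes "finite I" and "finite C" and "\<forall>(a, \<beta>)\<in>C. \<beta> \<in> \<rat> \<and> (\<forall>i\<in>I. a i \<in> \<rat>)"
    and "lp_feasible I C w"
  obtains v where "lp_optimal I C v" and "\<forall>i. v i \<in> \<rat>"
proof -
  have "{v. lp_vertex I C v} \<noteq> {}"
    using lp_vertex_below[OF assms(1,2,4)] by blast
  then obtain v where "is_arg_min (\<lambda>v. sum v I) (\<lambda>v. v \<in> {v. lp_vertex I C v}) v"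
    using ex_is_arg_min_if_finite[OF finite_lp_vertices[OF assms(1,2)]] by blast
  then have v: "lp_vertex I C v" and min: "\<And>u. lp_vertex I C u \<Longrightarrow> sum v I \<le> sum u I"
    by (simp_all add: is_arg_min_linorder)
  show ?thesis
  proof (rule that)
    have "sum v I \<le> sum w I" if w: "lp_feasible I C w" for w
    proof -
      obtain u where "lp_vertex I C u" "sum u I \<le> sum w I"
        using lp_vertex_below[OF assms(1,2) w] by blast
      then show ?thesis
        using min[of u] by linarith
    qed
    then show "lp_optimal I C v"
      using v by (simp add: lp_optimal_def lp_vertex_def)
    show "\<forall>i. v i \<in> \<rat>"
      using lp_vertex_rational[OF assms(1,3) v] by blast
  qed
qed

section \<open>Oriented colourings\<close>

lemma bfold_oriented_coloring_image:
  assumes col: "bfold_oriented_coloring V A b S f" and "A \<subseteq> V \<times> V" and inj: "inj_on \<phi> S"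
  shows "bfold_oriented_coloring V A b (\<phi> ` S) (\<lambda>x. \<phi> ` f x)"
proof -
  have sub: "f x \<subseteq> S" and card: "card (f x) = b" if "x \<in> V" for x
    using col that by (auto simp: bfold_oriented_coloring_def)
  have disjoint_iff: "\<phi> ` f x \<inter> \<phi> ` f y = {} \<longleftrightarrow> f x \<inter> f y = {}" if "x \<in> V" "y \<in> V" for x y
    using inj_on_image_Int[OF inj sub[OF that(1)] sub[OF that(2)]] by (metis image_is_empty)
  show ?thesis
    unfolding bfold_oriented_coloring_def
  proof (intro conjI allI impI ballI)
    fix x assume "x \<in> V"
    show "\<phi> ` f x \<subseteq> \<phi> ` S"
      using sub[OF \<open>x \<in> V\<close>] by blast
    show "card (\<phi> ` f x) = b"
      using card_image[OF inj_on_subset[OF inj sub[OF \<open>x \<in> V\<close>]]] card[OF \<open>x \<in> V\<close>] by simp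
  next
    fix x y assume "(x, y) \<in> A"
    then have "f x \<inter> f y = {}" and "x \<in> V" "y \<in> V"
      using col \<open>A \<subseteq> V \<times> V\<close> by (auto simp: bfold_oriented_coloring_def)
    then show "\<phi> ` f x \<inter> \<phi> ` f y = {}"
      using disjoint_iff by blast
  next
    fix x y z w assume arcs: "(x, y) \<in> A" "(z, w) \<in> A" and "\<phi> ` f x \<inter> \<phi> ` f w \<noteq> {}"
    then have "f x \<inter> f w \<noteq> {}"
      using \<open>A \<subseteq> V \<times> V\<close> disjoint_iff by blast
    then have "f y \<inter> f z = {}"
      using col arcs by (auto simp: bfold_oriented_coloring_def)
    then show "\<phi> ` f y \<inter> \<phi> ` f z = {}"
      using arcs \<open>A \<subseteq> V \<times> V\<close> disjoint_iff by blast
  qed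
qed

lemma bfold_oriented_coloring_transfer:
  assumes "bfold_oriented_coloring V A b S f" and "A \<subseteq> V \<times> V"
    and "finite S" and "finite T" and "card T = card S"
  shows "\<exists>g. bfold_oriented_coloring V A b T g"
proof -
  obtain \<phi> where "bij_betw \<phi> S T"
    using finite_same_card_bij[OF assms(3,4) assms(5)[symmetric]] by blast
  then have "inj_on \<phi> S" and image: "\<phi> ` S = T"
    by (simp_all add: bij_betw_def)
  from bfold_oriented_coloring_image[OF assms(1,2) this(1)] show ?thesis
    unfolding image by blast
qed

lemma bfold_oriented_coloring_mono:
  "bfold_oriented_coloring V A b S f \<Longrightarrow> S \<subseteq> T \<Longrightarrow> bfold_oriented_coloring V A b T f"
  by (auto simp: bfold_oriented_coloring_def)

lemma bfold_oriented_coloring_blowup: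
  assumes "bfold_oriented_coloring V A b S f"
  shows "bfold_oriented_coloring V A (b * c) (S \<times> {..<c}) (\<lambda>x. f x \<times> {..<c})"
proof -
  have "(f x \<times> {..<c}) \<inter> (f y \<times> {..<c}) = (f x \<inter> f y) \<times> {..<c}" for x y
    by blast
  then show ?thesis
    using assms by (auto simp: bfold_oriented_coloring_def card_cartesian_product)
qed

lemma bfold_oriented_chromatic_number_le:
  assumes "bfold_oriented_coloring V A b S f" and "A \<subseteq> V \<times> V" and "finite S"
  shows "bfold_oriented_chromatic_number V A b \<le> card S"
proof -
  have "\<exists>g. bfold_oriented_coloring V A b {..<card S} g"
    by (rule bfold_oriented_coloring_transfer[OF assms]) simp_all
  then have "\<exists>(T :: nat set) g. finite T \<and> card T = card S \<and> bfold_oriented_coloring V A b T g"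
    by (intro exI[of _ "{..<card S}"]) simp
  then show ?thesis
    unfolding bfold_oriented_chromatic_number_def by (rule Least_le)
qed

lemma bfold_oriented_coloring_singletons:
  assumes "oriented_graph V A"
  shows "bfold_oriented_coloring V A b (V \<times> {..<b}) (\<lambda>x. {x} \<times> {..<b})"
  using assms by (auto simp: bfold_oriented_coloring_def oriented_graph_def card_cartesian_product)

lemma bfold_oriented_coloring_chromatic_number:
  assumes "oriented_graph V A"
  shows "\<exists>f. bfold_oriented_coloring V A b {..<bfold_oriented_chromatic_number V A b} f"
proof -
  define P where "P k \<longleftrightarrow> (\<exists>(T :: nat set) g. finite T \<and> card T = k \<and> bfold_oriented_coloring V A b T g)"
    for k
  have graph: "finite V" "A \<subseteq> V \<times> V"
    using assms by (auto simp: oriented_graph_def)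
  have "\<exists>g. bfold_oriented_coloring V A b {..<card (V \<times> {..<b})} g"
    by (rule bfold_oriented_coloring_transfer[OF bfold_oriented_coloring_singletons[OF assms] graph(2)])
      (simp_all add: graph(1))
  then have "P (card (V \<times> {..<b}))"
    unfolding P_def by (metis card_lessThan finite_lessThan)
  then have "P (bfold_oriented_chromatic_number V A b)"
    unfolding bfold_oriented_chromatic_number_def P_def[symmetric] by (rule LeastI)
  then obtain T :: "nat set" and g where T: "finite T" "card T = bfold_oriented_chromatic_number V A b"
    and coloring: "bfold_oriented_coloring V A b T g"
    unfolding P_def by blast
  show ?thesis
    by (rule bfold_oriented_coloring_transfer[OF coloring graph(2) T(1)]) (simp_all add: T(2))
qed

section \<open>Fractional weightings of compatible families\<close>

text \<open>The colour classes \<open>U\<close>, \<open>U'\<close> of an oriented colouring: condition (ii) forbids arcs \<open>xy\<close>,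
  \<open>zw\<close> with \<open>x, w \<in> U\<close> and \<open>y, z \<in> U'\<close>; for \<open>U = U'\<close> this contains condition (i).\<close>
definition compatible_classes :: "('a \<times> 'a) set \<Rightarrow> 'a set \<Rightarrow> 'a set \<Rightarrow> bool" where
  "compatible_classes A U U' \<longleftrightarrow>
     (\<forall>x y z w. (x, y) \<in> A \<longrightarrow> (z, w) \<in> A \<longrightarrow> x \<in> U \<longrightarrow> w \<in> U \<longrightarrow> y \<in> U' \<longrightarrow> z \<notin> U')"

definition compatible_family :: "'a set \<Rightarrow> ('a \<times> 'a) set \<Rightarrow> 'a set set \<Rightarrow> bool" where
  "compatible_family V A F \<longleftrightarrow> F \<subseteq> Pow V \<and> (\<forall>U\<in>F. \<forall>U'\<in>F. compatible_classes A U U')"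

definition cover_constraints :: "'a set \<Rightarrow> (('a set \<Rightarrow> real) \<times> real) set" where
  "cover_constraints V = (\<lambda>x. (\<lambda>U. if x \<in> U then 1 else 0, 1)) ` V"

lemma lp_feasible_cover_constraints_iff:
  assumes "finite F"
  shows "lp_feasible F (cover_constraints V) w \<longleftrightarrow>
    (\<forall>U. U \<notin> F \<longrightarrow> w U = 0) \<and> (\<forall>U\<in>F. 0 \<le> w U) \<and> (\<forall>x\<in>V. 1 \<le> sum w {U \<in> F. x \<in> U})"
proof -
  have "dot_on F (\<lambda>U. if x \<in> U then 1 else 0) w = sum w {U \<in> F. x \<in> U}" for x
  proof -
    have "dot_on F (\<lambda>U. if x \<in> U then 1 else 0) w = (\<Sum>U\<in>F. if x \<in> U then w U else 0)"
      unfolding dot_on_def by (rule sum.cong) auto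
    then show ?thesis
      using assms by (simp add: sum.inter_filter)
  qed
  then show ?thesis
    by (auto simp: lp_feasible_def cover_constraints_def)
qed

lemma sum_card_fibres:
  assumes "finite S"
  shows "(\<Sum>U\<in>{U \<in> g ` S. P U}. card {i \<in> S. g i = U}) = card {i \<in> S. P (g i)}"
proof -
  let ?T = "{i \<in> S. P (g i)}"
  have "card ?T = (\<Sum>U\<in>g ` ?T. card {i \<in> ?T. g i = U})"
    using sum.image_gen[of ?T "\<lambda>_. 1 :: nat" g, folded card_eq_sum] assms by simp
  also have "\<dots> = (\<Sum>U\<in>{U \<in> g ` S. P U}. card {i \<in> S. g i = U})"
    by (rule sum.cong) (auto intro!: arg_cong[where f = card])
  finally show ?thesis ..
qed

lemma compatible_weighting_of_coloring:
  assumes col: "bfold_oriented_coloring V A b S f" and "finite S" and "0 < b"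
  obtains F w where "compatible_family V A F" and "lp_feasible F (cover_constraints V) w"
    and "sum w F = real (card S) / real b"
proof -
  define cl where "cl i = {x \<in> V. i \<in> f x}" for i
  define F where "F = cl ` S"
  define w where "w U = (if U \<in> F then real (card {i \<in> S. cl i = U}) / real b else 0)" for U
  have "finite F"
    using \<open>finite S\<close> by (simp add: F_def)
  have compatible: "compatible_family V A F"
    using col by (fastforce simp: compatible_family_def compatible_classes_def F_def cl_def
        bfold_oriented_coloring_def)
  have feasible: "lp_feasible F (cover_constraints V) w"
    unfolding lp_feasible_cover_constraints_iff[OF \<open>finite F\<close>]
  proof (intro conjI ballI allI impI)
    fix x assume "x \<in> V"
    then have "{i \<in> S. x \<in> cl i} = f x" and "card (f x) = b"
      using col by (auto simp: cl_def bfold_oriented_coloring_def)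
    then have "(\<Sum>U\<in>{U \<in> F. x \<in> U}. card {i \<in> S. cl i = U}) = b"
      using sum_card_fibres[OF \<open>finite S\<close>, of cl "\<lambda>U. x \<in> U"] by (simp add: F_def)
    then have "(\<Sum>U\<in>{U \<in> F. x \<in> U}. real (card {i \<in> S. cl i = U})) = real b"
      unfolding of_nat_sum[symmetric] by (rule arg_cong)
    then show "1 \<le> sum w {U \<in> F. x \<in> U}"
      using \<open>0 < b\<close> by (simp add: w_def sum_divide_distrib[symmetric])
  qed (simp_all add: w_def)
  have "(\<Sum>U\<in>F. card {i \<in> S. cl i = U}) = card S"
    using sum_card_fibres[OF \<open>finite S\<close>, of cl "\<lambda>_. True"] by (simp add: F_def)
  then have "(\<Sum>U\<in>F. real (card {i \<in> S. cl i = U})) = real (card S)"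
    unfolding of_nat_sum[symmetric] by (rule arg_cong)
  then have "sum w F = real (card S) / real b"
    by (simp add: w_def sum_divide_distrib[symmetric])
  with compatible feasible show ?thesis
    by (rule that)
qed

text \<open>The class of a colour \<open>(U, k)\<close> lies inside \<open>U\<close>, so compatibility of the family gives both
  conditions of an oriented colouring.\<close>
lemma bfold_oriented_coloring_of_compatible_family:
  assumes compatible: "compatible_family V A F" and "A \<subseteq> V \<times> V"
    and labels: "\<And>x. x \<in> V \<Longrightarrow> f x \<subseteq> (SIGMA U:{U \<in> F. x \<in> U}. K U) \<and> card (f x) = D"
  shows "bfold_oriented_coloring V A D (SIGMA U:F. K U) f"
proof -
  have colour_class: "x \<in> U" "U \<in> F" if "x \<in> V" "(U, k) \<in> f x" for x U k
    using labels[OF that(1)] that(2) by auto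
  have class_compatible: "compatible_classes A U U'" if "U \<in> F" "U' \<in> F" for U U'
    using compatible that by (simp add: compatible_family_def)
  show ?thesis
    unfolding bfold_oriented_coloring_def
  proof (intro conjI allI impI ballI)
    fix x assume "x \<in> V"
    then show "f x \<subseteq> (SIGMA U:F. K U)" "card (f x) = D"
      using labels by auto
  next
    fix x y assume "(x, y) \<in> A"
    then have "x \<in> V" "y \<in> V"
      using \<open>A \<subseteq> V \<times> V\<close> by auto
    show "f x \<inter> f y = {}"
    proof (rule ccontr)
      assume "f x \<inter> f y \<noteq> {}"
      then obtain U k where "(U, k) \<in> f x" "(U, k) \<in> f y"
        by auto
      then have "x \<in> U" "y \<in> U" "U \<in> F"
        using colour_class \<open>x \<in> V\<close> \<open>y \<in> V\<close> by auto
      then show False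
        using class_compatible[of U U] \<open>(x, y) \<in> A\<close> unfolding compatible_classes_def by blast
    qed
  next
    fix x y z w assume arcs: "(x, y) \<in> A" "(z, w) \<in> A" and "f x \<inter> f w \<noteq> {}"
    then have V: "x \<in> V" "y \<in> V" "z \<in> V" "w \<in> V"
      using \<open>A \<subseteq> V \<times> V\<close> by auto
    obtain U k where "(U, k) \<in> f x" "(U, k) \<in> f w"
      using \<open>f x \<inter> f w \<noteq> {}\<close> by auto
    then have U: "x \<in> U" "w \<in> U" "U \<in> F"
      using colour_class V by auto
    show "f y \<inter> f z = {}"
    proof (rule ccontr)
      assume "f y \<inter> f z \<noteq> {}"
      then obtain U' k' where "(U', k') \<in> f y" "(U', k') \<in> f z"
        by auto
      then have "y \<in> U'" "z \<in> U'" "U' \<in> F"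
        using colour_class V by auto
      then show False
        using class_compatible[of U U'] U arcs unfolding compatible_classes_def by blast
    qed
  qed
qed

lemma coloring_of_integral_weighting:
  assumes "compatible_family V A F" and "finite F" and "A \<subseteq> V \<times> V"
    and covered: "\<forall>x\<in>V. D \<le> (\<Sum>U\<in>{U \<in> F. x \<in> U}. m U)"
  shows "\<exists>f. bfold_oriented_coloring V A D (SIGMA U:F. {..<m U}) f"
proof -
  have "D \<le> card (SIGMA U:{U \<in> F. x \<in> U}. {..<m U})" if "x \<in> V" for x
    using covered that \<open>finite F\<close> by simp
  then have "\<forall>x\<in>V. \<exists>T. T \<subseteq> (SIGMA U:{U \<in> F. x \<in> U}. {..<m U}) \<and> card T = D"
    by (meson obtain_subset_with_card_n)
  then obtain f where "\<And>x. x \<in> V \<Longrightarrow> f x \<subseteq> (SIGMA U:{U \<in> F. x \<in> U}. {..<m U}) \<and> card (f x) = D"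
    by metis
  then show ?thesis
    using bfold_oriented_coloring_of_compatible_family[OF assms(1,3)] by blast
qed

lemma bfold_oriented_chromatic_number_le_weighting:
  assumes "compatible_family V A F" and "finite F" and "A \<subseteq> V \<times> V"
    and feasible: "lp_feasible F (cover_constraints V) v" and rational: "\<forall>U\<in>F. v U \<in> \<rat>"
  obtains D where "0 < D" and "real (bfold_oriented_chromatic_number V A D) \<le> real D * sum v F"
proof -
  obtain D :: nat where "0 < D" and D: "\<forall>U\<in>F. real D * v U \<in> \<int>"
    using common_denominator[OF \<open>finite F\<close> rational] by blast
  define m where "m U = nat \<lfloor>real D * v U\<rfloor>" for U
  have v: "(\<forall>U\<in>F. 0 \<le> v U) \<and> (\<forall>x\<in>V. 1 \<le> sum v {U \<in> F. x \<in> U})"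
    using feasible by (simp add: lp_feasible_cover_constraints_iff[OF \<open>finite F\<close>])
  have m: "real (m U) = real D * v U" if "U \<in> F" for U
    using D v that by (auto simp: m_def Ints_def)
  have sum_m: "real (\<Sum>U\<in>G. m U) = real D * sum v G" if "G \<subseteq> F" for G
    using m that by (auto simp: sum_distrib_left intro: sum.cong)
  have "\<forall>x\<in>V. D \<le> (\<Sum>U\<in>{U \<in> F. x \<in> U}. m U)"
  proof
    fix x assume "x \<in> V"
    then have "real D * 1 \<le> real D * sum v {U \<in> F. x \<in> U}"
      using v by (intro mult_left_mono) auto
    then show "D \<le> (\<Sum>U\<in>{U \<in> F. x \<in> U}. m U)"
      using sum_m[of "{U \<in> F. x \<in> U}"] by (simp del: of_nat_sum)
  qed
  then obtain f where "bfold_oriented_coloring V A D (SIGMA U:F. {..<m U}) f"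
    using coloring_of_integral_weighting assms(1-3) by blast
  then have "bfold_oriented_chromatic_number V A D \<le> card (SIGMA U:F. {..<m U})"
    using \<open>finite F\<close> \<open>A \<subseteq> V \<times> V\<close> by (intro bfold_oriented_chromatic_number_le) auto
  also have "card (SIGMA U:F. {..<m U}) = (\<Sum>U\<in>F. m U)"
    using \<open>finite F\<close> by simp
  finally have "real (bfold_oriented_chromatic_number V A D) \<le> real (\<Sum>U\<in>F. m U)"
    by (simp only: of_nat_le_iff)
  with \<open>0 < D\<close> show ?thesis
    unfolding sum_m[OF order_refl] by (rule that)
qed

lemma optimal_rational_weighting:
  assumes "finite V" and "compatible_family V A F\<^sub>1" and "lp_feasible F\<^sub>1 (cover_constraints V) w\<^sub>1"
  obtains F v where "compatible_family V A F" and "lp_feasible F (cover_constraints V) v"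
    and "\<forall>U. v U \<in> \<rat>"
    and "\<And>F' w. compatible_family V A F' \<Longrightarrow> lp_feasible F' (cover_constraints V) w \<Longrightarrow> sum v F \<le> sum w F'"
proof -
  define \<F> where "\<F> = {F. compatible_family V A F \<and> (\<exists>w. lp_feasible F (cover_constraints V) w)}"
  have "\<F> \<subseteq> Pow (Pow V)"
    by (auto simp: \<F>_def compatible_family_def)
  then have "finite \<F>"
    using \<open>finite V\<close> by (simp add: finite_subset)
  have "\<forall>F\<in>\<F>. \<exists>v. lp_optimal F (cover_constraints V) v \<and> (\<forall>U. v U \<in> \<rat>)"
  proof
    fix F assume "F \<in> \<F>"
    obtain w where "compatible_family V A F" and w: "lp_feasible F (cover_constraints V) w"
      using \<open>F \<in> \<F>\<close> by (auto simp: \<F>_def)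
    then have "finite F"
      using \<open>finite V\<close> by (auto simp: compatible_family_def intro: finite_subset)
    moreover have "finite (cover_constraints V)"
      using \<open>finite V\<close> by (simp add: cover_constraints_def)
    moreover have "\<forall>(a, \<beta>)\<in>cover_constraints V. \<beta> \<in> \<rat> \<and> (\<forall>U\<in>F. a U \<in> \<rat>)"
      by (auto simp: cover_constraints_def)
    ultimately obtain v where "lp_optimal F (cover_constraints V) v" "\<forall>U. v U \<in> \<rat>"
      using w by (rule lp_rational_optimum)
    then show "\<exists>v. lp_optimal F (cover_constraints V) v \<and> (\<forall>U. v U \<in> \<rat>)"
      by blast
  qed
  then obtain opt where opt: "\<forall>F\<in>\<F>. lp_optimal F (cover_constraints V) (opt F) \<and> (\<forall>U. opt F U \<in> \<rat>)"
    by (rule bchoice[THEN exE])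
  have "\<F> \<noteq> {}"
    using assms(2,3) by (auto simp: \<F>_def)
  then obtain F where "is_arg_min (\<lambda>F. sum (opt F) F) (\<lambda>F. F \<in> \<F>) F"
    using ex_is_arg_min_if_finite[OF \<open>finite \<F>\<close>] by blast
  then have "F \<in> \<F>" and min: "\<And>F'. F' \<in> \<F> \<Longrightarrow> sum (opt F) F \<le> sum (opt F') F'"
    by (simp_all add: is_arg_min_linorder)
  show ?thesis
  proof (rule that)
    show "compatible_family V A F" "lp_feasible F (cover_constraints V) (opt F)" "\<forall>U. opt F U \<in> \<rat>"
      using \<open>F \<in> \<F>\<close> opt by (auto simp: \<F>_def lp_optimal_def)
    fix F' w assume "compatible_family V A F'" and w: "lp_feasible F' (cover_constraints V) w"
    then have "F' \<in> \<F>"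
      by (auto simp: \<F>_def)
    then have "sum (opt F') F' \<le> sum w F'"
      using opt w by (simp add: lp_optimal_def)
    then show "sum (opt F) F \<le> sum w F'"
      using min[OF \<open>F' \<in> \<F>\<close>] by linarith
  qed
qed

lemma compatible_weighting_of_chromatic_number:
  assumes "oriented_graph V A" and "0 < b"
  obtains F w where "compatible_family V A F" and "lp_feasible F (cover_constraints V) w"
    and "sum w F = real (bfold_oriented_chromatic_number V A b) / real b"
proof -
  obtain f where "bfold_oriented_coloring V A b {..<bfold_oriented_chromatic_number V A b} f"
    using bfold_oriented_coloring_chromatic_number[OF assms(1)] by blast
  then obtain F w where "compatible_family V A F" "lp_feasible F (cover_constraints V) w"
    and "sum w F = real (card {..<bfold_oriented_chromatic_number V A b}) / real b"
    by (rule compatible_weighting_of_coloring[OF _ finite_lessThan assms(2)])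
  then show ?thesis
    using that by simp
qed

lemma fractional_oriented_chromatic_number_le_ratio:
  "0 < b \<Longrightarrow> fractional_oriented_chromatic_number V A
    \<le> real (bfold_oriented_chromatic_number V A b) / real b"
  unfolding fractional_oriented_chromatic_number_def by (intro cINF_lower bdd_belowI[of _ 0]) auto

theorem fractional_oriented_chromatic_number_attained:
  assumes "oriented_graph V A"
  obtains D where "0 < D"
    and "fractional_oriented_chromatic_number V A = real (bfold_oriented_chromatic_number V A D) / real D"
proof -
  let ?ratio = "\<lambda>b. real (bfold_oriented_chromatic_number V A b) / real b"
  have graph: "finite V" "A \<subseteq> V \<times> V"
    using assms by (auto simp: oriented_graph_def)
  obtain F\<^sub>1 w\<^sub>1 where "compatible_family V A F\<^sub>1" "lp_feasible F\<^sub>1 (cover_constraints V) w\<^sub>1"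
    using compatible_weighting_of_chromatic_number[OF assms zero_less_one] .
  then obtain F v where F: "compatible_family V A F" and v: "lp_feasible F (cover_constraints V) v"
    and "\<forall>U. v U \<in> \<rat>"
    and optimal: "\<And>F' w. compatible_family V A F' \<Longrightarrow> lp_feasible F' (cover_constraints V) w
      \<Longrightarrow> sum v F \<le> sum w F'"
    using optimal_rational_weighting[OF graph(1)] by blast
  have "finite F"
    using F graph(1) by (auto simp: compatible_family_def intro: finite_subset)
  then obtain D where "0 < D" and "real (bfold_oriented_chromatic_number V A D) \<le> real D * sum v F"
    using bfold_oriented_chromatic_number_le_weighting[OF F _ graph(2) v] \<open>\<forall>U. v U \<in> \<rat>\<close>
    by blast
  then have upper: "?ratio D \<le> sum v F"
    by (simp add: pos_divide_le_eq mult.commute)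
  have lower: "sum v F \<le> ?ratio b" if "0 < b" for b
  proof -
    obtain F' w where "compatible_family V A F'" "lp_feasible F' (cover_constraints V) w"
      and "sum w F' = ?ratio b"
      by (rule compatible_weighting_of_chromatic_number[OF assms \<open>0 < b\<close>])
    then show ?thesis
      using optimal by metis
  qed
  have "fractional_oriented_chromatic_number V A \<le> ?ratio D"
    using \<open>0 < D\<close> by (rule fractional_oriented_chromatic_number_le_ratio)
  moreover have "sum v F \<le> fractional_oriented_chromatic_number V A"
    unfolding fractional_oriented_chromatic_number_def using lower by (intro cINF_greatest) auto
  ultimately show ?thesis
    using that[OF \<open>0 < D\<close>] upper by linarith
qed

section \<open>Consistent sub-orientations of Kneser graphs\<close>

lemma bfold_oriented_coloring_of_kneser_hom:
  assumes "consistent_kneser_suborientation n m W B" and "oriented_hom V A W B h"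
  shows "bfold_oriented_coloring V A m {..<n} h"
proof -
  have hom: "\<And>x. x \<in> V \<Longrightarrow> h x \<in> W" "\<And>x y. (x, y) \<in> A \<Longrightarrow> (h x, h y) \<in> B"
    using assms(2) by (auto simp: oriented_hom_def)
  have W: "W \<subseteq> {s. s \<subseteq> {..<n} \<and> card s = m}" and disjoint: "\<forall>x y. (x, y) \<in> B \<longrightarrow> x \<inter> y = {}"
    and consistent: "\<forall>x y w z. (x, y) \<in> B \<longrightarrow> (w, z) \<in> B \<longrightarrow> x \<inter> z \<noteq> {} \<longrightarrow> y \<inter> w = {}"
    using assms(1) by (simp_all add: consistent_kneser_suborientation_def)
  show ?thesis
    unfolding bfold_oriented_coloring_def
  proof (intro conjI allI impI ballI)
    fix x assume "x \<in> V"
    then show "h x \<subseteq> {..<n}" "card (h x) = m"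
      using W hom(1) by auto
  next
    fix x y assume "(x, y) \<in> A"
    then show "h x \<inter> h y = {}"
      using disjoint hom(2) by blast
  next
    fix x y z w assume "(x, y) \<in> A" "(z, w) \<in> A" "h x \<inter> h w \<noteq> {}"
    then show "h y \<inter> h z = {}"
      using consistent hom(2) by blast
  qed
qed

lemma oriented_graph_of_disjoint_arcs:
  assumes "finite W" and "B \<subseteq> W \<times> W" and nonempty: "\<And>P. P \<in> W \<Longrightarrow> P \<noteq> {}"
    and disjoint: "\<And>P Q. (P, Q) \<in> B \<Longrightarrow> P \<inter> Q = {}"
    and consistent: "\<And>P Q P' Q'. (P, Q) \<in> B \<Longrightarrow> (P', Q') \<in> B \<Longrightarrow> P \<inter> Q' \<noteq> {} \<Longrightarrow> Q \<inter> P' = {}"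
  shows "oriented_graph W B"
  unfolding oriented_graph_def
proof (intro conjI allI impI notI)
  show "finite W" "B \<subseteq> W \<times> W"
    by fact+
  fix P Q
  show False if "(P, P) \<in> B"
  proof -
    have "P \<in> W"
      using that \<open>B \<subseteq> W \<times> W\<close> by auto
    then show False
      using disjoint[OF that] nonempty by simp
  qed
  show False if PQ: "(P, Q) \<in> B" and QP: "(Q, P) \<in> B"
  proof -
    have "P \<in> W" "Q \<in> W"
      using PQ \<open>B \<subseteq> W \<times> W\<close> by auto
    then have "Q \<inter> Q = {}"
      using consistent[OF PQ QP] nonempty by simp
    then show False
      using nonempty \<open>Q \<in> W\<close> by simp
  qed
qed

lemma kneser_hom_of_bfold_oriented_coloring:
  assumes graph: "oriented_graph V A" and "0 < m" and col: "bfold_oriented_coloring V A m {..<n} f"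
  defines "W \<equiv> f ` V" and "B \<equiv> (\<lambda>(x, y). (f x, f y)) ` A"
  shows "consistent_kneser_suborientation n m W B" and "oriented_hom V A W B f"
proof -
  have "finite V" and "A \<subseteq> V \<times> V"
    using graph by (auto simp: oriented_graph_def)
  have colours: "\<forall>x\<in>V. f x \<subseteq> {..<n} \<and> card (f x) = m"
    and arc_disjoint: "\<forall>x y. (x, y) \<in> A \<longrightarrow> f x \<inter> f y = {}"
    and arc_consistent: "\<forall>x y z w. (x, y) \<in> A \<longrightarrow> (z, w) \<in> A \<longrightarrow> f x \<inter> f w \<noteq> {} \<longrightarrow> f y \<inter> f z = {}"
    using col by (simp_all add: bfold_oriented_coloring_def)
  have W: "W \<subseteq> {s. s \<subseteq> {..<n} \<and> card s = m}"
    using colours by (auto simp: W_def)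
  have disjoint: "P \<inter> Q = {}" if "(P, Q) \<in> B" for P Q
    using that arc_disjoint by (auto simp: B_def)
  have consistent: "Q \<inter> P' = {}" if arcs: "(P, Q) \<in> B" "(P', Q') \<in> B" and "P \<inter> Q' \<noteq> {}"
    for P Q P' Q'
  proof -
    obtain x y z w where "(x, y) \<in> A" "(z, w) \<in> A" "P = f x" "Q = f y" "P' = f z" "Q' = f w"
      using arcs by (auto simp: B_def)
    then show ?thesis
      using arc_consistent \<open>P \<inter> Q' \<noteq> {}\<close> by blast
  qed
  have "oriented_graph W B"
  proof (rule oriented_graph_of_disjoint_arcs)
    show "finite W" "B \<subseteq> W \<times> W"
      using \<open>finite V\<close> \<open>A \<subseteq> V \<times> V\<close> by (auto simp: W_def B_def)
    show "P \<noteq> {}" if "P \<in> W" for P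
      using that W \<open>0 < m\<close> by auto
  qed (use disjoint consistent in auto)
  then show "consistent_kneser_suborientation n m W B"
    unfolding consistent_kneser_suborientation_def using W disjoint consistent by blast
  show "oriented_hom V A W B f"
    by (auto simp: oriented_hom_def W_def B_def)
qed

lemma kneser_hom_iff_bfold_oriented_coloring:
  assumes "oriented_graph V A" and "0 < m"
  shows "(\<exists>W B h. consistent_kneser_suborientation n m W B \<and> oriented_hom V A W B h)
    \<longleftrightarrow> (\<exists>f. bfold_oriented_coloring V A m {..<n} f)"
  using bfold_oriented_coloring_of_kneser_hom kneser_hom_of_bfold_oriented_coloring[OF assms] by blast

lemma bfold_oriented_coloring_of_fractional_le:
  assumes "oriented_graph V A" and "0 < b"
    and "fractional_oriented_chromatic_number V A \<le> real a / real b"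
  obtains c f where "0 < c" and "bfold_oriented_coloring V A (b * c) {..<a * c} f"
proof -
  obtain D where "0 < D"
    and attained: "fractional_oriented_chromatic_number V A = real (bfold_oriented_chromatic_number V A D) / real D"
    by (rule fractional_oriented_chromatic_number_attained[OF assms(1)])
  let ?k = "bfold_oriented_chromatic_number V A D"
  have "real ?k / real D \<le> real a / real b"
    using assms(3) attained by simp
  then have "?k * b \<le> a * D"
    using \<open>0 < D\<close> \<open>0 < b\<close> by (simp add: divide_le_eq le_divide_eq flip: of_nat_mult)
  obtain f where "bfold_oriented_coloring V A D {..<?k} f"
    using bfold_oriented_coloring_chromatic_number[OF assms(1)] by blast
  then have "bfold_oriented_coloring V A (D * b) ({..<?k} \<times> {..<b}) (\<lambda>x. f x \<times> {..<b})"
    by (rule bfold_oriented_coloring_blowup)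
  then have "\<exists>g. bfold_oriented_coloring V A (D * b) {..<?k * b} g"
    using assms(1) unfolding oriented_graph_def
    by (intro bfold_oriented_coloring_transfer) (auto simp: card_cartesian_product)
  then obtain g where "bfold_oriented_coloring V A (D * b) {..<?k * b} g"
    by blast
  then have "bfold_oriented_coloring V A (b * D) {..<a * D} g"
    using \<open>?k * b \<le> a * D\<close> by (auto simp: mult.commute intro: bfold_oriented_coloring_mono)
  with \<open>0 < D\<close> show ?thesis
    by (rule that)
qed

lemma fractional_le_of_bfold_oriented_coloring:
  assumes "oriented_graph V A" and "0 < b" and "0 < c"
    and col: "bfold_oriented_coloring V A (b * c) {..<a * c} f"
  shows "fractional_oriented_chromatic_number V A \<le> real a / real b"
proof -
  have "bfold_oriented_chromatic_number V A (b * c) \<le> a * c"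
    using bfold_oriented_chromatic_number_le[OF col] assms(1) by (simp add: oriented_graph_def)
  then have "real (bfold_oriented_chromatic_number V A (b * c)) \<le> real (a * c)"
    by (simp only: of_nat_le_iff)
  then have "real (bfold_oriented_chromatic_number V A (b * c)) / real (b * c) \<le> real (a * c) / real (b * c)"
    by (rule divide_right_mono) simp
  also have "\<dots> = real a / real b"
    using \<open>0 < c\<close> by simp
  finally show ?thesis
    using fractional_oriented_chromatic_number_le_ratio[of "b * c" V A] assms(2,3) by simp
qed

lemma fractional_oriented_chromatic_number_le_iff:
  assumes "oriented_graph V A" and "0 < b"
  shows "fractional_oriented_chromatic_number V A \<le> real a / real b
    \<longleftrightarrow> (\<exists>c>0. \<exists>f. bfold_oriented_coloring V A (b * c) {..<a * c} f)"
proof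
  assume "fractional_oriented_chromatic_number V A \<le> real a / real b"
  then obtain c f where "0 < c" "bfold_oriented_coloring V A (b * c) {..<a * c} f"
    by (rule bfold_oriented_coloring_of_fractional_le[OF assms])
  then show "\<exists>c>0. \<exists>f. bfold_oriented_coloring V A (b * c) {..<a * c} f"
    by blast
next
  assume "\<exists>c>0. \<exists>f. bfold_oriented_coloring V A (b * c) {..<a * c} f"
  then obtain c f where "0 < c" "bfold_oriented_coloring V A (b * c) {..<a * c} f"
    by blast
  then show "fractional_oriented_chromatic_number V A \<le> real a / real b"
    by (rule fractional_le_of_bfold_oriented_coloring[OF assms])
qed

theorem theorem1:
  fixes V :: "'a set" and A :: "('a \<times> 'a) set" and a b :: nat
  assumes "oriented_graph V A" and "0 < a" and "0 < b"
  shows "fractional_oriented_chromatic_number V A \<le> real a / real b \<longleftrightarrow>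
    (\<exists>c::nat. 0 < c \<and> (\<exists>W B h. consistent_kneser_suborientation (a * c) (b * c) W B
                                  \<and> oriented_hom V A W B h))"
proof -
  have "(\<exists>W B h. consistent_kneser_suborientation (a * c) (b * c) W B \<and> oriented_hom V A W B h)
      \<longleftrightarrow> (\<exists>f. bfold_oriented_coloring V A (b * c) {..<a * c} f)" if "0 < c" for c
    by (rule kneser_hom_iff_bfold_oriented_coloring[OF assms(1)]) (simp add: that assms(3))
  then show ?thesis
    unfolding fractional_oriented_chromatic_number_le_iff[OF assms(1,3)] by blast
qed

end
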